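(* Suppose $|\mathit{Obs}|>1$ and $m\ge2$, and assume also $|\mathit{Obs}|\le m$ so that the class $\mathcal C$ below is nonempty. Let $\mathcal C$ be the class of $m$-agent models in which every observation $o\in\mathit{Obs}$ is the initial observation $\vec o_{\iota,a}$ of at least one agent $a$. Then there is a CTL*KΔ$_m$ formula $\varphi$ such that no CTL*K$_m$ formula $\varphi'$ satisfies: for every $M\in\mathcal C$, $M\models\varphi$ iff $M\models\varphi'$.
   Context: Fix a countably infinite set $\mathit{AP}$ of atomic propositions, a finite nonempty set $\mathit{Obs}$ of observations, and a finite set of agents $\mathit{Ag}=\{a_1,\dots,a_m\}$. For a word $w$ we write $w_i$ for its letter at position $i$ (positions start at $0$), $w_{\le i}$ for its prefix ending at position $i$, $|w|$ for its length (finite words) and $\mathit{last}(w)$ for its last letter; $w\preceq w'$ means $w$ is a prefix of $w'$. Syntax of CTL*KΔ$_m$: history formulas $\varphi::=p\mid\neg\varphi\mid\varphi\wedge\varphi\mid\mathbf A\psi\mid\mathbf K_a\varphi\mid\Delta^{o}_a\varphi$ and path formulas $\psi::=\varphi\mid\neg\psi\mid\psi\wedge\psi\mid\mathbf X\psi\mid\psi\,\mathbf U\,\psi$, with $p\in\mathit{AP}$, $a\in\mathit{Ag}$, $o\in\mathit{Obs}$; formulas are history formulas. CTL*K$_m$ is the fragment of formulas containing no operator $\Delta^o_a$. A multiagent model is $M=(\mathit{AP}_f,S,T,V,\{\sim_o\}_{o\in\mathit{Obs}},s_\iota,\vec o_\iota)$ where $\mathit{AP}_f\subseteq\mathit{AP}$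 is finite, $S$ is a finite set of states, $T\subseteq S\times S$ is left-total, $V:S\to2^{\mathit{AP}_f}$, each $\sim_o$ is an equivalence relation on $S$, $s_\iota\in S$, and $\vec o_\iota=(\vec o_{\iota,a})_{a\in\mathit{Ag}}\in\mathit{Obs}^{\mathit{Ag}}$ gives each agent an initial observation. Paths are infinite sequences of states $s_0s_1\dots$ with $s_iTs_{i+1}$ (starting anywhere); histories are finite nonempty prefixes of paths. An observation record is a finite word over $\mathit{Obs}\times\mathbb N$; $r_{=n}$ is the subword of $r$ consisting of the pairs with second component $n$. A record tuple is $\vec r=(\vec r_a)_{a\in\mathit{Ag}}$; $\vec r\cdot(o,n)_a$ is $\vec r$ with $\vec r_a$ replaced by $\vec r_a\cdot(o,n)$; $\vec\epsilon$ is the tuple of empty records. For agent $a$: $\mathit{ol}_a(\vec r,0)=\vec o_{\iota,a}\cdot o_1\cdots o_k$ if $(\vec r_a)_{=0}=(o_1,0)\cdots(o_k,0)$, and $\mathit{ol}_a(\vec r,n+1)=\mathit{last}(\mathit{ol}_a(\vec r,n))\cdot o_1\cdots o_k$ if $(\vec r_a)_{=n+1}=(o_1,n+1)\cdots(o_k,n+1)$. $h\approx^{\vec r}_a h'$ iff $|h|=|h'|$ and for all $i<|h|$ and all $o$ in $\mathit{ol}_a(\vec r,i)$, $h_i\sim_o h'_i$. Natural semantics: $h,\vec r\models p$ iff $p\in V(\mathit{last}(h))$; negation and conjunction as usual; $h,\vec r\models\mathbf A\psi$ iff for all paths $\pi$ with $h\preceq\pi$, $\pi,|h|-1,\vec r\models\psi$;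 $h,\vec r\models\mathbf K_a\varphi$ iff $h',\vec r\models\varphi$ for all histories $h'\approx^{\vec r}_a h$; $h,\vec r\models\Delta^o_a\varphi$ iff $h,\vec r\cdot(o,|h|-1)_a\models\varphi$; $\pi,n,\vec r\models\varphi$ iff $\pi_{\le n},\vec r\models\varphi$; negation and conjunction as usual; $\pi,n,\vec r\models\mathbf X\psi$ iff $\pi,n+1,\vec r\models\psi$; $\pi,n,\vec r\models\psi_1\mathbf U\psi_2$ iff there is $m'\ge n$ with $\pi,m',\vec r\models\psi_2$ and $\pi,j,\vec r\models\psi_1$ for all $n\le j<m'$. $M\models\varphi$ iff $s_\iota,\vec\epsilon\models\varphi$ ($s_\iota$ viewed as a one-state history). *)

theory Defs
  imports Main
begin

text \<open>Atomic propositions: AP = nat (countably infinite). Observations: a finite type 'o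
 (Obs = UNIV). Agents: a finite type 'a (Ag = UNIV, m = CARD('a)).
 States of models are natural numbers (every finite model is isomorphic to one of these).\<close>

datatype ('o, 'a) hform =
    Prop nat
  | HNeg "('o, 'a) hform"
  | HAnd "('o, 'a) hform" "('o, 'a) hform"
  | All "('o, 'a) pform"
  | Know 'a "('o, 'a) hform"
  | Delta 'o 'a "('o, 'a) hform"
and ('o, 'a) pform =
    HF "('o, 'a) hform"
  | PNeg "('o, 'a) pform"
  | PAnd "('o, 'a) pform" "('o, 'a) pform"
  | Next "('o, 'a) pform"
  | Until "('o, 'a) pform" "('o, 'a) pform"

fun delta_free_h :: "('o, 'a) hform \<Rightarrow> bool"
and delta_free_p :: "('o, 'a) pform \<Rightarrow> bool" where
  "delta_free_h (Prop p) = True"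
| "delta_free_h (HNeg f) = delta_free_h f"
| "delta_free_h (HAnd f g) = (delta_free_h f \<and> delta_free_h g)"
| "delta_free_h (All p) = delta_free_p p"
| "delta_free_h (Know a f) = delta_free_h f"
| "delta_free_h (Delta o' a f) = False"
| "delta_free_p (HF f) = delta_free_h f"
| "delta_free_p (PNeg p) = delta_free_p p"
| "delta_free_p (PAnd p q) = (delta_free_p p \<and> delta_free_p q)"
| "delta_free_p (Next p) = delta_free_p p"
| "delta_free_p (Until p q) = (delta_free_p p \<and> delta_free_p q)"

record ('o, 'a) model =
  apf :: "nat set"
  states :: "nat set"
  trans :: "(nat \<times> nat) set"
  val :: "nat \<Rightarrow> nat set"
  obsrel :: "'o \<Rightarrow> (nat \<times> nat) set"
  sinit :: nat
  oinit :: "'a \<Rightarrow> 'o"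

definition wf_model :: "('o, 'a) model \<Rightarrow> bool" where
  "wf_model M \<longleftrightarrow> finite (apf M) \<and> finite (states M) \<and>
     trans M \<subseteq> states M \<times> states M \<and>
     (\<forall>s\<in>states M. \<exists>t. (s, t) \<in> trans M) \<and>
     (\<forall>s. val M s \<subseteq> apf M) \<and>
     (\<forall>o'. equiv (states M) (obsrel M o')) \<and>
     sinit M \<in> states M"

definition is_path :: "('o, 'a) model \<Rightarrow> (nat \<Rightarrow> nat) \<Rightarrow> bool" where
  "is_path M \<pi> \<longleftrightarrow> (\<forall>i. \<pi> i \<in> states M \<and> (\<pi> i, \<pi> (Suc i)) \<in> trans M)"

definition is_history :: "('o, 'a) model \<Rightarrow> nat list \<Rightarrow> bool" where
  "is_history M h \<longleftrightarrow> h \<noteq> [] \<and> (\<exists>\<pi>. is_path M \<pi> \<and> h = map \<pi> [0..<length h])"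

type_synonym ('o, 'a) records = "'a \<Rightarrow> ('o \<times> nat) list"

fun ol :: "('o, 'a) model \<Rightarrow> ('o, 'a) records \<Rightarrow> 'a \<Rightarrow> nat \<Rightarrow> 'o list" where
  "ol M r a 0 = oinit M a # map fst (filter (\<lambda>p. snd p = 0) (r a))"
| "ol M r a (Suc n) = last (ol M r a n) # map fst (filter (\<lambda>p. snd p = Suc n) (r a))"

definition indist :: "('o, 'a) model \<Rightarrow> ('o, 'a) records \<Rightarrow> 'a \<Rightarrow> nat list \<Rightarrow> nat list \<Rightarrow> bool" where
  "indist M r a h h' \<longleftrightarrow> length h = length h' \<and>
     (\<forall>i<length h. \<forall>o'\<in>set (ol M r a i). (h ! i, h' ! i) \<in> obsrel M o')"

fun hsat :: "('o, 'a) model \<Rightarrow> nat list \<Rightarrow> ('o, 'a) records \<Rightarrow> ('o, 'a) hform \<Rightarrow> bool"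
and psat :: "('o, 'a) model \<Rightarrow> (nat \<Rightarrow> nat) \<Rightarrow> nat \<Rightarrow> ('o, 'a) records \<Rightarrow> ('o, 'a) pform \<Rightarrow> bool" where
  "hsat M h r (Prop p) = (p \<in> val M (last h))"
| "hsat M h r (HNeg f) = (\<not> hsat M h r f)"
| "hsat M h r (HAnd f g) = (hsat M h r f \<and> hsat M h r g)"
| "hsat M h r (All p) = (\<forall>\<pi>. is_path M \<pi> \<and> h = map \<pi> [0..<length h] \<longrightarrow> psat M \<pi> (length h - 1) r p)"
| "hsat M h r (Know a f) = (\<forall>h'. is_history M h' \<and> indist M r a h h' \<longrightarrow> hsat M h' r f)"
| "hsat M h r (Delta o' a f) = hsat M h (r(a := r a @ [(o', length h - 1)])) f"
| "psat M \<pi> n r (HF f) = hsat M (map \<pi> [0..<Suc n]) r f"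
| "psat M \<pi> n r (PNeg p) = (\<not> psat M \<pi> n r p)"
| "psat M \<pi> n r (PAnd p q) = (psat M \<pi> n r p \<and> psat M \<pi> n r q)"
| "psat M \<pi> n r (Next p) = psat M \<pi> (Suc n) r p"
| "psat M \<pi> n r (Until p q) = (\<exists>m\<ge>n. psat M \<pi> m r q \<and> (\<forall>j. n \<le> j \<and> j < m \<longrightarrow> psat M \<pi> j r p))"

definition models :: "('o, 'a) model \<Rightarrow> ('o, 'a) hform \<Rightarrow> bool" where
  "models M f \<longleftrightarrow> hsat M [sinit M] (\<lambda>_. []) f"

definition in_class_C :: "('o, 'a) model \<Rightarrow> bool" where
  "in_class_C M \<longleftrightarrow> wf_model M \<and> (\<forall>o'. \<exists>a. oinit M a = o')"

end

theory Submission
  imports Defs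
begin

text \<open>Without \<open>\<Delta>\<close> the observation records stay empty, so at every step an agent sees the
  current state only through its initial observation. Hence a map between models with complete
  transition relations that preserves the valuation and projects and lifts these views preserves
  every \<open>\<Delta>\<close>-free formula. Such a map collapses the four-state model below, in which \<open>o\<^sub>1\<close>
  reveals whether the state is below 2 and \<open>o\<^sub>2\<close> reveals its parity, onto a two-state model
  whose observations reveal nothing. But \<open>Delta o\<^sub>2 a (Know a (Prop 0))\<close> separates the two:
  an agent \<open>a\<close> starting with \<open>o\<^sub>1\<close> that also observes \<open>o\<^sub>2\<close> pins the four-state model down to
  its initial state, where proposition \<open>0\<close> holds.\<close>

lemma ol_no_records: "ol M (\<lambda>_. []) a i = [oinit M a]"
  by (induction i) auto

lemma indist_no_records:
  "indist M (\<lambda>_. []) a h h' \<longleftrightarrow>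
     length h = length h' \<and> (\<forall>i<length h. (h ! i, h' ! i) \<in> obsrel M (oinit M a))"
  by (simp add: indist_def ol_no_records)

lemma is_path_complete:
  assumes "trans M = states M \<times> states M"
  shows "is_path M \<pi> \<longleftrightarrow> (\<forall>i. \<pi> i \<in> states M)"
  using assms by (auto simp: is_path_def)

lemma is_history_complete:
  assumes complete: "trans M = states M \<times> states M"
  shows "is_history M h \<longleftrightarrow> h \<noteq> [] \<and> set h \<subseteq> states M"
proof
  assume "is_history M h"
  then obtain \<pi> where "h \<noteq> []" "\<forall>i. \<pi> i \<in> states M" "h = map \<pi> [0..<length h]"
    by (auto simp: is_history_def is_path_complete[OF complete])
  then show "h \<noteq> [] \<and> set h \<subseteq> states M"
    by (metis image_subsetI set_map)
next
  assume h: "h \<noteq> [] \<and> set h \<subseteq> states M"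
  define \<pi> where "\<pi> i = (if i < length h then h ! i else hd h)" for i
  have "\<forall>i. \<pi> i \<in> states M" using h by (auto simp: \<pi>_def)
  moreover have "h = map \<pi> [0..<length h]" by (rule nth_equalityI) (simp_all add: \<pi>_def)
  ultimately show "is_history M h"
    using h by (auto simp: is_history_def is_path_complete[OF complete])
qed

text \<open>With empty records agent \<open>a\<close> observes through \<open>oinit a\<close> alone, so the two view
  conditions are the forth and back clauses of a bounded morphism for the \<open>\<Delta>\<close>-free logic.\<close>

locale view_morphism =
  fixes M N :: "('o, 'a) model" and f :: "nat \<Rightarrow> nat"
  assumes complete_M: "trans M = states M \<times> states M"
    and complete_N: "trans N = states N \<times> states N"
    and onto: "f ` states M = states N"
    and val_preserved: "s \<in> states M \<Longrightarrow> val N (f s) = val M s"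
    and view_forth: "\<lbrakk>(s, t) \<in> obsrel M (oinit M a); s \<in> states M; t \<in> states M\<rbrakk>
      \<Longrightarrow> (f s, f t) \<in> obsrel N (oinit N a)"
    and view_back: "\<lbrakk>(f s, t') \<in> obsrel N (oinit N a); s \<in> states M\<rbrakk>
      \<Longrightarrow> \<exists>t\<in>states M. (s, t) \<in> obsrel M (oinit M a) \<and> f t = t'"
begin

lemma lift_path:
  assumes \<pi>': "\<forall>i. \<pi>' i \<in> states N" and h: "set h \<subseteq> states M"
    and prefix: "map f h = map \<pi>' [0..<length h]"
  obtains \<pi> where "\<forall>i. \<pi> i \<in> states M" "h = map \<pi> [0..<length h]" "f \<circ> \<pi> = \<pi>'"
proof -
  have image: "\<pi>' i \<in> f ` states M" for i using \<pi>' onto by simp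
  define \<pi> where "\<pi> i = (if i < length h then h ! i else inv_into (states M) f (\<pi>' i))" for i
  have "\<forall>i. \<pi> i \<in> states M" using h image by (auto simp: \<pi>_def inv_into_into)
  moreover have "h = map \<pi> [0..<length h]" by (rule nth_equalityI) (simp_all add: \<pi>_def)
  moreover have "f \<circ> \<pi> = \<pi>'"
  proof
    fix i
    show "(f \<circ> \<pi>) i = \<pi>' i"
      using image prefix nth_map[of i h f] by (cases "i < length h") (auto simp: \<pi>_def f_inv_into_f)
  qed
  ultimately show thesis by (rule that)
qed

lemma lift_view:
  assumes h: "set h \<subseteq> states M" and len: "length h'' = length h"
    and view: "\<forall>i<length h. (f (h ! i), h'' ! i) \<in> obsrel N (oinit N a)"
  obtains h' where "set h' \<subseteq> states M" "length h' = length h"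
    "\<forall>i<length h. (h ! i, h' ! i) \<in> obsrel M (oinit M a)" "map f h' = h''"
proof -
  have "\<forall>i. \<exists>t. i < length h \<longrightarrow>
      t \<in> states M \<and> (h ! i, t) \<in> obsrel M (oinit M a) \<and> f t = h'' ! i"
    using view h view_back by (meson nth_mem subsetD)
  then obtain \<sigma> where \<sigma>: "\<forall>i<length h.
      \<sigma> i \<in> states M \<and> (h ! i, \<sigma> i) \<in> obsrel M (oinit M a) \<and> f (\<sigma> i) = h'' ! i"
    by metis
  define h' where "h' = map \<sigma> [0..<length h]"
  have "map f h' = h''" using \<sigma> len by (intro nth_equalityI) (auto simp: h'_def)
  with \<sigma> show thesis by (intro that[of h']) (auto simp: h'_def)
qed

lemma is_path_M: "is_path M \<pi> \<longleftrightarrow> (\<forall>i. \<pi> i \<in> states M)"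
  by (rule is_path_complete[OF complete_M])

lemma is_path_N: "is_path N \<pi> \<longleftrightarrow> (\<forall>i. \<pi> i \<in> states N)"
  by (rule is_path_complete[OF complete_N])

lemma is_history_M: "is_history M h \<longleftrightarrow> h \<noteq> [] \<and> set h \<subseteq> states M"
  by (rule is_history_complete[OF complete_M])

lemma is_history_N: "is_history N h \<longleftrightarrow> h \<noteq> [] \<and> set h \<subseteq> states N"
  by (rule is_history_complete[OF complete_N])

lemma hsat_All_iff:
  assumes IH: "\<And>\<pi> n. \<forall>i. \<pi> i \<in> states M \<Longrightarrow> psat M \<pi> n r p \<longleftrightarrow> psat N (f \<circ> \<pi>) n r p"
    and h: "set h \<subseteq> states M"
  shows "hsat M h r (All p) \<longleftrightarrow> hsat N (map f h) r (All p)"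
proof
  assume L: "hsat M h r (All p)"
  show "hsat N (map f h) r (All p)"
  proof (simp only: hsat.simps length_map, intro allI impI)
    fix \<pi>' assume "is_path N \<pi>' \<and> map f h = map \<pi>' [0..<length h]"
    then obtain \<pi> where "\<forall>i. \<pi> i \<in> states M" "h = map \<pi> [0..<length h]" "f \<circ> \<pi> = \<pi>'"
      using h lift_path unfolding is_path_N by blast
    with L IH show "psat N \<pi>' (length h - 1) r p" by (auto simp: is_path_M)
  qed
next
  assume R: "hsat N (map f h) r (All p)"
  show "hsat M h r (All p)"
  proof (simp only: hsat.simps, intro allI impI)
    fix \<pi> assume \<pi>: "is_path M \<pi> \<and> h = map \<pi> [0..<length h]"
    then have "is_path N (f \<circ> \<pi>)" using onto by (auto simp: is_path_M is_path_N)
    moreover have "map f h = map (f \<circ> \<pi>) [0..<length (map f h)]"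
      using \<pi> by (metis length_map map_map)
    ultimately have "psat N (f \<circ> \<pi>) (length h - 1) r p" using R by auto
    with \<pi> IH show "psat M \<pi> (length h - 1) r p" by (auto simp: is_path_M)
  qed
qed

lemma hsat_Know_iff:
  assumes IH: "\<And>h. h \<noteq> [] \<Longrightarrow> set h \<subseteq> states M \<Longrightarrow>
      hsat M h (\<lambda>_. []) \<phi> \<longleftrightarrow> hsat N (map f h) (\<lambda>_. []) \<phi>"
    and h: "set h \<subseteq> states M"
  shows "hsat M h (\<lambda>_. []) (Know a \<phi>) \<longleftrightarrow> hsat N (map f h) (\<lambda>_. []) (Know a \<phi>)"
proof
  assume L: "hsat M h (\<lambda>_. []) (Know a \<phi>)"
  show "hsat N (map f h) (\<lambda>_. []) (Know a \<phi>)"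
  proof (simp only: hsat.simps, intro allI impI)
    fix h'' assume "is_history N h'' \<and> indist N (\<lambda>_. []) a (map f h) h''"
    then have "h'' \<noteq> []" "length h'' = length h"
      "\<forall>i<length h. (f (h ! i), h'' ! i) \<in> obsrel N (oinit N a)"
      by (auto simp: is_history_N indist_no_records)
    then obtain h' where "h' \<noteq> []" "set h' \<subseteq> states M" "indist M (\<lambda>_. []) a h h'" "map f h' = h''"
      using h lift_view by (auto simp: indist_no_records) (metis length_0_conv)
    with L IH show "hsat N h'' (\<lambda>_. []) \<phi>" by (auto simp: is_history_M)
  qed
next
  assume R: "hsat N (map f h) (\<lambda>_. []) (Know a \<phi>)"
  show "hsat M h (\<lambda>_. []) (Know a \<phi>)"
  proof (simp only: hsat.simps, intro allI impI)
    fix h' assume h': "is_history M h' \<and> indist M (\<lambda>_. []) a h h'"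
    then have "is_history N (map f h')" using onto by (auto simp: is_history_M is_history_N)
    moreover have "indist N (\<lambda>_. []) a (map f h) (map f h')"
      using h h' by (auto simp: is_history_M indist_no_records intro!: view_forth)
    ultimately have "hsat N (map f h') (\<lambda>_. []) \<phi>" using R by auto
    with h' IH show "hsat M h' (\<lambda>_. []) \<phi>" by (auto simp: is_history_M)
  qed
qed

lemma hsat_transfer:
  "\<lbrakk>delta_free_h \<phi>; h \<noteq> []; set h \<subseteq> states M\<rbrakk>
    \<Longrightarrow> hsat M h (\<lambda>_. []) \<phi> \<longleftrightarrow> hsat N (map f h) (\<lambda>_. []) \<phi>"
  and psat_transfer: "\<lbrakk>delta_free_p \<psi>; \<forall>i. \<pi> i \<in> states M\<rbrakk>
    \<Longrightarrow> psat M \<pi> n (\<lambda>_. []) \<psi> \<longleftrightarrow> psat N (f \<circ> \<pi>) n (\<lambda>_. []) \<psi>"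
proof (induction \<phi> and \<psi> arbitrary: h and \<pi> n)
  case (Prop p)
  then have "last h \<in> states M" by auto
  with Prop show ?case by (simp add: last_map val_preserved)
next
  case (All p)
  then show ?case by (intro hsat_All_iff) (auto simp: comp_def)
next
  case (Know a \<phi>)
  then show ?case by (intro hsat_Know_iff) auto
next
  case (HF \<phi>)
  then show ?case by (simp add: image_subset_iff comp_def del: upt_Suc)
qed auto

lemma models_transfer:
  assumes "delta_free_h \<phi>" "sinit M \<in> states M" "f (sinit M) = sinit N"
  shows "models M \<phi> \<longleftrightarrow> models N \<phi>"
  using hsat_transfer[of \<phi> "[sinit M]"] assms by (simp add: models_def)

end

definition four_state_model :: "'o \<Rightarrow> 'o \<Rightarrow> ('a \<Rightarrow> 'o) \<Rightarrow> ('o, 'a) model" where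
  "four_state_model o\<^sub>1 o\<^sub>2 oi =
    \<lparr>apf = {0}, states = {0, 1, 2, 3}, trans = {0, 1, 2, 3} \<times> {0, 1, 2, 3},
     val = (\<lambda>s. if s = 0 \<or> s = 3 then {0} else {}),
     obsrel = (\<lambda>o'. {(s, t). s \<in> {0, 1, 2, 3} \<and> t \<in> {0, 1, 2, 3} \<and>
        (o' = o\<^sub>1 \<longrightarrow> (s < 2 \<longleftrightarrow> t < 2)) \<and> (o' = o\<^sub>2 \<longrightarrow> (even s \<longleftrightarrow> even t))}),
     sinit = 0, oinit = oi\<rparr>"

definition two_state_model :: "('a \<Rightarrow> 'o) \<Rightarrow> ('o, 'a) model" where
  "two_state_model oi =
    \<lparr>apf = {0}, states = {0, 1}, trans = {0, 1} \<times> {0, 1},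
     val = (\<lambda>s. if s = 0 then {0} else {}), obsrel = (\<lambda>_. {0, 1} \<times> {0, 1}),
     sinit = 0, oinit = oi\<rparr>"

definition collapse :: "nat \<Rightarrow> nat" where
  "collapse s = (if s = 0 \<or> s = 3 then 0 else 1)"

lemma four_state_model_simps [simp]:
  "states (four_state_model o\<^sub>1 o\<^sub>2 oi) = {0, 1, 2, 3}"
  "val (four_state_model o\<^sub>1 o\<^sub>2 oi) = (\<lambda>s. if s = 0 \<or> s = 3 then {0} else {})"
  "sinit (four_state_model o\<^sub>1 o\<^sub>2 oi) = 0"
  "oinit (four_state_model o\<^sub>1 o\<^sub>2 oi) = oi"
  by (simp_all add: four_state_model_def)

lemma two_state_model_simps [simp]:
  "states (two_state_model oi) = {0, 1}"
  "trans (two_state_model oi) = {0, 1} \<times> {0, 1}"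
  "val (two_state_model oi) = (\<lambda>s. if s = 0 then {0} else {})"
  "obsrel (two_state_model oi) o' = {0, 1} \<times> {0, 1}"
  "sinit (two_state_model oi) = 0"
  "oinit (two_state_model oi) = oi"
  by (simp_all add: two_state_model_def)

lemma wf_four_state_model: "wf_model (four_state_model o\<^sub>1 o\<^sub>2 oi)"
  by (auto simp: wf_model_def four_state_model_def equiv_def refl_on_def sym_def Relation.trans_def)

lemma wf_two_state_model: "wf_model (two_state_model oi)"
  by (auto simp: wf_model_def two_state_model_def equiv_def refl_on_def sym_def Relation.trans_def)

lemma four_state_view_meets_both_classes:
  assumes "o\<^sub>1 \<noteq> o\<^sub>2" and s: "s \<in> {0, 1, 2, 3}" and b: "b \<in> {0, 1}"
  shows "\<exists>t\<in>{0, 1, 2, 3}. (s, t) \<in> obsrel (four_state_model o\<^sub>1 o\<^sub>2 oi) o' \<and> collapse t = b"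
proof -
  consider "o' = o\<^sub>1" | "o' = o\<^sub>2" | "o' \<noteq> o\<^sub>1" "o' \<noteq> o\<^sub>2" by blast
  then show ?thesis
  proof cases
    case 1
    with assms show ?thesis
      by (intro bexI[of _ "if s < 2 then b else 3 - b"]) (auto simp: four_state_model_def collapse_def)
  next
    case 2
    with assms show ?thesis
      by (intro bexI[of _ "if even s then 2 * b else 3 - 2 * b"]) (auto simp: four_state_model_def collapse_def)
  next
    case 3
    with assms show ?thesis
      by (intro bexI[of _ b]) (auto simp: four_state_model_def collapse_def)
  qed
qed

lemma view_morphism_collapse:
  assumes "o\<^sub>1 \<noteq> o\<^sub>2"
  shows "view_morphism (four_state_model o\<^sub>1 o\<^sub>2 oi) (two_state_model oi) collapse"
proof
  show "collapse ` states (four_state_model o\<^sub>1 o\<^sub>2 oi) = states (two_state_model oi)"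
    by (force simp: collapse_def)
  fix s t' a
  assume "(collapse s, t') \<in> obsrel (two_state_model oi) (oinit (two_state_model oi) a)"
    and "s \<in> states (four_state_model o\<^sub>1 o\<^sub>2 oi)"
  then have "s \<in> {0, 1, 2, 3}" "t' \<in> {0, 1}" by auto
  then show "\<exists>t\<in>states (four_state_model o\<^sub>1 o\<^sub>2 oi).
      (s, t) \<in> obsrel (four_state_model o\<^sub>1 o\<^sub>2 oi) (oinit (four_state_model o\<^sub>1 o\<^sub>2 oi) a) \<and>
      collapse t = t'"
    using four_state_view_meets_both_classes[OF assms] by simp
qed (auto simp: four_state_model_def two_state_model_def collapse_def)

lemma models_four_state_model:
  assumes "o\<^sub>1 \<noteq> o\<^sub>2" and "oi a = o\<^sub>1"
  shows "models (four_state_model o\<^sub>1 o\<^sub>2 oi) (Delta o\<^sub>2 a (Know a (Prop 0)))"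
proof -
  let ?M = "four_state_model o\<^sub>1 o\<^sub>2 oi" and ?r = "(\<lambda>_. [])(a := [(o\<^sub>2, 0)])"
  have pinned: "h' = [0]" if "indist ?M ?r a [0] h'" for h'
  proof -
    from that have "length h' = 1" and "(0, h' ! 0) \<in> obsrel ?M o\<^sub>1"
      and "(0, h' ! 0) \<in> obsrel ?M o\<^sub>2"
      using assms by (auto simp: indist_def)
    with assms show ?thesis by (auto simp: four_state_model_def length_Suc_conv)
  qed
  then have "\<forall>h'. is_history ?M h' \<and> indist ?M ?r a [0] h' \<longrightarrow> 0 \<in> val ?M (last h')"
    by (auto dest: pinned)
  then show ?thesis by (simp add: models_def)
qed

lemma not_models_two_state_model:
  "\<not> models (two_state_model oi) (Delta o' a (Know a (Prop 0)))"
proof -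
  let ?M = "two_state_model oi" and ?r = "(\<lambda>_. [])(a := [(o', 0)])"
  have "is_history ?M [1]" "indist ?M ?r a [0] [1]" "0 \<notin> val ?M (last [1])"
    by (simp_all add: is_history_complete indist_def)
  then show ?thesis unfolding models_def by force
qed

theorem mainTheorem10:
  fixes dummy_o :: "'o::finite" and dummy_a :: "'a::finite"
  assumes "card (UNIV :: 'o set) > 1"
    and "card (UNIV :: 'a set) \<ge> 2"
    and "card (UNIV :: 'o set) \<le> card (UNIV :: 'a set)"
  shows "\<exists>\<phi> :: ('o, 'a) hform. \<not> (\<exists>\<phi>'. delta_free_h \<phi>' \<and>
           (\<forall>M :: ('o, 'a) model. in_class_C M \<longrightarrow> (models M \<phi> \<longleftrightarrow> models M \<phi>')))"
proof -
  \<comment> \<open>The bound on the number of agents follows from the other two hypotheses.\<close>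
  obtain g :: "'o \<Rightarrow> 'a" where "inj g"
    using card_le_inj[OF finite_UNIV finite_UNIV assms(3)] by blast
  define oi where "oi = inv g"
  have every_obs_initial: "\<forall>o'. \<exists>a. oi a = o'"
    using \<open>inj g\<close> by (metis oi_def inj_imp_surj_inv surjD)
  fix a :: 'a
  define o\<^sub>1 where "o\<^sub>1 = oi a"
  have "\<not> (\<forall>x y :: 'o. x = y)" using assms(1) card_le_Suc0_iff_eq[of "UNIV :: 'o set"] by auto
  then obtain o\<^sub>2 where "o\<^sub>2 \<noteq> o\<^sub>1" by (metis (full_types))
  let ?\<phi> = "Delta o\<^sub>2 a (Know a (Prop 0)) :: ('o, 'a) hform"
  have C: "in_class_C (four_state_model o\<^sub>1 o\<^sub>2 oi)" "in_class_C (two_state_model oi)"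
    using every_obs_initial by (simp_all add: in_class_C_def wf_four_state_model wf_two_state_model)
  have "models (four_state_model o\<^sub>1 o\<^sub>2 oi) \<phi>' \<longleftrightarrow> models (two_state_model oi) \<phi>'"
    if "delta_free_h \<phi>'" for \<phi>'
    using view_morphism.models_transfer[OF view_morphism_collapse that] \<open>o\<^sub>2 \<noteq> o\<^sub>1\<close>
    by (simp add: collapse_def)
  moreover have "models (four_state_model o\<^sub>1 o\<^sub>2 oi) ?\<phi>" "\<not> models (two_state_model oi) ?\<phi>"
    using \<open>o\<^sub>2 \<noteq> o\<^sub>1\<close> by (simp_all add: models_four_state_model o\<^sub>1_def not_models_two_state_model)
  ultimately show ?thesis using C by blast
qed

end
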